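(* Consider CAV $i$ and CAV $i-1$ on different roads, in the safe-merging setting of the context, under (A1) and (SA). Let $t=t_i^0+k\Delta t$. Assume $v_i\ge 0$ at all times considered, and $u_{\min}\le 0$. Suppose that $b_{\eta_2}(t)\ge 0$, that QP$_2(t)$ is feasible, and that the control applied on $[t,t+\Delta t)$ is a feasible point of QP$_2(t)$. Then QP$_2(t+\Delta t)$ is also feasible.
   Context: **Vehicle model.** The vehicle dynamics are $\dot x_i=v_i$ and $\dot v_i=u_i$, where $x_i\in[0,L]$ is the distance travelled by CAV $i$ from the origin of its road, $v_i$ its speed and $u_i$ its acceleration (the control). The merging point is at position $L>0$ on each road. CAV $i-1$ is the CAV immediately ahead of $i$ in the first-in-first-out crossing order, travelling on the other road, with position $x_{i-1}$ (measured on its own road), speed $v_{i-1}$ and acceleration $u_{i-1}$, all known to CAV $i$. Let $z_{i,i-1}=x_{i-1}-x_i$, let $\varphi>0$, $\delta$ and $k_2>0$ be constants, and let $\varphi_2=\varphi/L$. **Control bounds.** Control bounds are $u_{\min}\le u_i\le u_{i,\max}$ with $u_{\min}<0<u_{i,\max}$. **(A1) Common minimum acceleration.** All CAVs share the same minimum acceleration $u_{\min}$. In particular $u_{i-1}(t)\ge u_{\min}$ for all $t$. **Functions of time:** - Merging safety function: $b_2=z_{i,i-1}-\varphi_2x_iv_i-\delta$. - CBF constraint: $b_{\mathrm{cbf}_2}(u_i)=v_{i-1}-v_i-\varphi_2v_i^2-\varphi_2x_iu_i+k_2b_2\ge0$. - Feasibility function: $b_F=v_{i-1}-v_i-\varphi_2v_i^2+k_2b_2-\varphi_2x_iu_{\min}$.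 - Auxiliary function: $b_{\eta_2}=v_{i-1}-v_i-\varphi_2v_i^2-\varphi_2x_iu_{\min}$. - Feasibility constraint: $\eta_2(u_i)=u_{i-1}-u_i-2\varphi_2v_iu_i-\varphi_2v_iu_{\min}+k_2 b_{\eta_2}\ge0$. Note that $\eta_2=\dot b_{\eta_2}+k_2b_{\eta_2}$ and $\dot b_F+k_2b_F=\eta_2+k_2b_{\mathrm{cbf}_2}$. **QP$_2(t)$.** QP$_2(t)$ is the quadratic program in the variables $(u_i,e_i)$ that minimizes $\beta e_i^2+\tfrac12(u_i-u_{\mathrm{ref}}(t))^2$ subject to: - $b_{\mathrm{cbf}_2}(u_i)\ge0$, - $u_{\min}\le u_i\le u_{i,\max}$, - $\eta_2(u_i)\ge0$, - a control Lyapunov constraint $c_1(t)+c_2(t)u_i\le e_i$ with a free slack variable $e_i$. All quantities are evaluated at time $t$. "Feasible" means the constraint set is nonempty. **(SA) Sampling / forward invariance.** The control is held constant on each $[t,t+\Delta t)$, and $\Delta t$ is small enough that for each $b\in\{b_2,b_F,b_{\eta_2}\}$: if $b(t)\ge0$ and $\dot b(t)+k_2b(t)\ge0$ under the applied controls, then $b(t+\Delta t)\ge0$. *)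

theory Defs
  imports "HOL-Analysis.Analysis"
begin

text \<open>Trajectories are functions of time.  xi, vi, ui: position, speed, acceleration
  of CAV i; xp, vp, up: those of CAV i-1.  phi2 = phi / L.\<close>

definition b2 :: "real \<Rightarrow> real \<Rightarrow> real \<Rightarrow> (real \<Rightarrow> real) \<Rightarrow> (real \<Rightarrow> real)
    \<Rightarrow> (real \<Rightarrow> real) \<Rightarrow> real \<Rightarrow> real" where
  "b2 L phi delta xi vi xp s = (xp s - xi s) - (phi / L) * xi s * vi s - delta"

definition bcbf2 :: "real \<Rightarrow> real \<Rightarrow> real \<Rightarrow> real \<Rightarrow> (real \<Rightarrow> real) \<Rightarrow> (real \<Rightarrow> real)
    \<Rightarrow> (real \<Rightarrow> real) \<Rightarrow> (real \<Rightarrow> real) \<Rightarrow> real \<Rightarrow> real \<Rightarrow> real" where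
  "bcbf2 L phi delta k2 xi vi xp vp s u =
     vp s - vi s - (phi / L) * (vi s)\<^sup>2 - (phi / L) * xi s * u + k2 * b2 L phi delta xi vi xp s"

definition bF :: "real \<Rightarrow> real \<Rightarrow> real \<Rightarrow> real \<Rightarrow> real \<Rightarrow> (real \<Rightarrow> real) \<Rightarrow> (real \<Rightarrow> real)
    \<Rightarrow> (real \<Rightarrow> real) \<Rightarrow> (real \<Rightarrow> real) \<Rightarrow> real \<Rightarrow> real" where
  "bF L phi delta k2 umin xi vi xp vp s =
     vp s - vi s - (phi / L) * (vi s)\<^sup>2 + k2 * b2 L phi delta xi vi xp s - (phi / L) * xi s * umin"

definition beta2 :: "real \<Rightarrow> real \<Rightarrow> real \<Rightarrow> (real \<Rightarrow> real) \<Rightarrow> (real \<Rightarrow> real)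
    \<Rightarrow> (real \<Rightarrow> real) \<Rightarrow> real \<Rightarrow> real" where
  "beta2 L phi umin xi vi vp s = vp s - vi s - (phi / L) * (vi s)\<^sup>2 - (phi / L) * xi s * umin"

definition eta2 :: "real \<Rightarrow> real \<Rightarrow> real \<Rightarrow> real \<Rightarrow> (real \<Rightarrow> real) \<Rightarrow> (real \<Rightarrow> real)
    \<Rightarrow> (real \<Rightarrow> real) \<Rightarrow> (real \<Rightarrow> real) \<Rightarrow> real \<Rightarrow> real \<Rightarrow> real" where
  "eta2 L phi k2 umin xi vi vp up s u =
     up s - u - 2 * (phi / L) * vi s * u - (phi / L) * vi s * umin + k2 * beta2 L phi umin xi vi vp s"

text \<open>Constraint set of QP_2(s) in the variables (u, e); c1, c2 are the CLF coefficients.\<close>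
definition QP2_constraints :: "real \<Rightarrow> real \<Rightarrow> real \<Rightarrow> real \<Rightarrow> real \<Rightarrow> real
    \<Rightarrow> (real \<Rightarrow> real) \<Rightarrow> (real \<Rightarrow> real) \<Rightarrow> (real \<Rightarrow> real) \<Rightarrow> (real \<Rightarrow> real) \<Rightarrow> (real \<Rightarrow> real)
    \<Rightarrow> (real \<Rightarrow> real) \<Rightarrow> (real \<Rightarrow> real) \<Rightarrow> real \<Rightarrow> real \<Rightarrow> real \<Rightarrow> bool" where
  "QP2_constraints L phi delta k2 umin umax xi vi xp vp up c1 c2 s u e \<longleftrightarrow>
     bcbf2 L phi delta k2 xi vi xp vp s u \<ge> 0 \<and>
     umin \<le> u \<and> u \<le> umax \<and>
     eta2 L phi k2 umin xi vi vp up s u \<ge> 0 \<and>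
     c1 s + c2 s * u \<le> e"

definition QP2_feasible where
  "QP2_feasible L phi delta k2 umin umax xi vi xp vp up c1 c2 s \<longleftrightarrow>
     (\<exists>u e. QP2_constraints L phi delta k2 umin umax xi vi xp vp up c1 c2 s u e)"

end

theory Submission
  imports Defs
begin

text \<open>The control u applied at t satisfies both the CBF constraint and the feasibility
  constraint eta2 >= 0.  Because eta2 = b_eta2' + k2 b_eta2 and b_F' + k2 b_F = eta2 + k2 b_cbf2,
  the sampling assumption keeps b_eta2 and b_F nonnegative at t + dt; here b_F(t) >= 0 since b_F is
  the CBF constraint evaluated at u_min <= u.  At t + dt the control u_min is then feasible: the CBF
  constraint at u_min is exactly b_F, the feasibility constraint at u_min is nonnegative by (A1),
  v_i >= 0 and u_min <= 0, and the free slack variable absorbs the CLF constraint.\<close>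

lemma bcbf2_umin_eq_bF:
  "bcbf2 L phi delta k2 xi vi xp vp s umin = bF L phi delta k2 umin xi vi xp vp s"
  unfolding bcbf2_def bF_def by simp

lemma bF_ge_bcbf2:
  assumes "phi / L \<ge> 0" "xi s \<ge> 0" "umin \<le> u"
  shows "bcbf2 L phi delta k2 xi vi xp vp s u \<le> bF L phi delta k2 umin xi vi xp vp s"
proof -
  have "(phi / L) * xi s * umin \<le> (phi / L) * xi s * u"
    using mult_left_mono[OF assms(3) mult_nonneg_nonneg[OF assms(1,2)]] .
  then show ?thesis unfolding bcbf2_def bF_def by linarith
qed

lemma eta2_umin_nonneg:
  assumes "phi / L \<ge> 0" "k2 \<ge> 0" "umin \<le> 0" "vi s \<ge> 0" "umin \<le> up s"
    and "beta2 L phi umin xi vi vp s \<ge> 0"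
  shows "eta2 L phi k2 umin xi vi vp up s umin \<ge> 0"
proof -
  have "(phi / L) * vi s * umin \<le> 0"
    using mult_nonneg_nonpos[OF mult_nonneg_nonneg[OF assms(1,4)] assms(3)] .
  moreover have "k2 * beta2 L phi umin xi vi vp s \<ge> 0"
    using assms(2,6) by simp
  moreover have "eta2 L phi k2 umin xi vi vp up s umin
      = (up s - umin) - 3 * ((phi / L) * vi s * umin) + k2 * beta2 L phi umin xi vi vp s"
    unfolding eta2_def by (simp add: algebra_simps)
  ultimately show ?thesis
    using assms(5) by linarith
qed

lemma QP2_feasible_at_umin:
  assumes "phi / L \<ge> 0" "k2 \<ge> 0" "umin \<le> 0" "umin \<le> umax" "vi s \<ge> 0" "umin \<le> up s"
    and "bF L phi delta k2 umin xi vi xp vp s \<ge> 0" "beta2 L phi umin xi vi vp s \<ge> 0"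
  shows "QP2_feasible L phi delta k2 umin umax xi vi xp vp up c1 c2 s"
proof -
  have "QP2_constraints L phi delta k2 umin umax xi vi xp vp up c1 c2 s umin (c1 s + c2 s * umin)"
    unfolding QP2_constraints_def bcbf2_umin_eq_bF
    using assms eta2_umin_nonneg[of phi L k2 umin vi s up xi vp] by auto
  then show ?thesis unfolding QP2_feasible_def by blast
qed

context
  fixes xi vi ui xp vp up :: "real \<Rightarrow> real" and s :: real and S :: "real set"
  assumes xi': "(xi has_real_derivative vi s) (at s within S)"
    and vi': "(vi has_real_derivative ui s) (at s within S)"
    and xp': "(xp has_real_derivative vp s) (at s within S)"
    and vp': "(vp has_real_derivative up s) (at s within S)"
begin

lemma beta2_has_real_derivative:
  "(beta2 L phi umin xi vi vp has_real_derivative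
      eta2 L phi k2 umin xi vi vp up s (ui s) - k2 * beta2 L phi umin xi vi vp s) (at s within S)"
  unfolding beta2_def[abs_def]
  by (rule xi' vi' xp' vp' derivative_eq_intros refl)+
     (simp add: eta2_def beta2_def power2_eq_square algebra_simps)

lemma b2_has_real_derivative:
  "(b2 L phi delta xi vi xp has_real_derivative
      vp s - vi s - (phi / L) * ((vi s)\<^sup>2 + xi s * ui s)) (at s within S)"
  unfolding b2_def[abs_def]
  by (rule xi' vi' xp' vp' derivative_eq_intros refl)+
     (simp add: power2_eq_square algebra_simps)

lemma bF_has_real_derivative:
  "(bF L phi delta k2 umin xi vi xp vp has_real_derivative
      eta2 L phi k2 umin xi vi vp up s (ui s) + k2 * bcbf2 L phi delta k2 xi vi xp vp s (ui s)
      - k2 * bF L phi delta k2 umin xi vi xp vp s) (at s within S)"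
proof -
  have bF_split: "bF L phi delta k2 umin xi vi xp vp
      = (\<lambda>r. beta2 L phi umin xi vi vp r + k2 * b2 L phi delta xi vi xp r)"
    by (rule ext) (simp add: bF_def beta2_def)
  show ?thesis
    unfolding bF_split
  proof (rule DERIV_cong[OF DERIV_add[OF beta2_has_real_derivative
                                         DERIV_cmult[OF b2_has_real_derivative]]])
    show "eta2 L phi k2 umin xi vi vp up s (ui s) - k2 * beta2 L phi umin xi vi vp s
        + k2 * (vp s - vi s - (phi / L) * ((vi s)\<^sup>2 + xi s * ui s))
      = eta2 L phi k2 umin xi vi vp up s (ui s) + k2 * bcbf2 L phi delta k2 xi vi xp vp s (ui s)
        - k2 * (beta2 L phi umin xi vi vp s + k2 * b2 L phi delta xi vi xp s)"
      unfolding bcbf2_def beta2_def by (simp add: algebra_simps)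
  qed
qed

end

theorem theorem3:
  fixes L phi delta k2 umin umax dt t0 :: real and k :: nat
    and xi vi ui xp vp up c1 c2 :: "real \<Rightarrow> real"
  assumes L_pos: "L > 0" and phi_pos: "phi > 0" and k2_pos: "k2 > 0"
    and bounds: "umin < 0" "0 < umax" and umin_le: "umin \<le> 0"
    and dt_pos: "dt > 0"
    and dyn_xi: "\<And>s. (xi has_real_derivative vi s) (at s within {s..})"
    and dyn_vi: "\<And>s. (vi has_real_derivative ui s) (at s within {s..})"
    and dyn_xp: "\<And>s. (xp has_real_derivative vp s) (at s within {s..})"
    and dyn_vp: "\<And>s. (vp has_real_derivative up s) (at s within {s..})"
    and pos_range: "\<And>s. 0 \<le> xi s \<and> xi s \<le> L"
    and A1: "\<And>s. umin \<le> up s"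
    and vi_nonneg: "\<And>s. vi s \<ge> 0"
    and hold: "\<And>m::nat. \<forall>s \<in> {t0 + real m * dt ..< t0 + real m * dt + dt}.
                         ui s = ui (t0 + real m * dt)"
    and SA: "\<And>m::nat. \<forall>b \<in> {b2 L phi delta xi vi xp,
                                bF L phi delta k2 umin xi vi xp vp,
                                beta2 L phi umin xi vi vp}.
               \<forall>D. b (t0 + real m * dt) \<ge> 0 \<longrightarrow>
                   (b has_real_derivative D) (at (t0 + real m * dt) within {t0 + real m * dt..}) \<longrightarrow>
                   D + k2 * b (t0 + real m * dt) \<ge> 0 \<longrightarrow>
                   b (t0 + real m * dt + dt) \<ge> 0"
    and beta_nonneg: "beta2 L phi umin xi vi vp (t0 + real k * dt) \<ge> 0"
    and feas: "QP2_feasible L phi delta k2 umin umax xi vi xp vp up c1 c2 (t0 + real k * dt)"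
    and applied: "\<exists>e. QP2_constraints L phi delta k2 umin umax xi vi xp vp up c1 c2
                        (t0 + real k * dt) (ui (t0 + real k * dt)) e"
  shows "QP2_feasible L phi delta k2 umin umax xi vi xp vp up c1 c2 (t0 + real k * dt + dt)"
proof -
  \<comment> \<open>\<open>feas\<close> is implied by \<open>applied\<close>; \<open>hold\<close> and \<open>dt_pos\<close> act only through \<open>SA\<close>.\<close>
  define t where "t = t0 + real k * dt"
  have p_nonneg: "phi / L \<ge> 0" using L_pos phi_pos by simp
  have cbf: "bcbf2 L phi delta k2 xi vi xp vp t (ui t) \<ge> 0" and u_ge: "umin \<le> ui t"
    and eta: "eta2 L phi k2 umin xi vi vp up t (ui t) \<ge> 0"
    using applied unfolding QP2_constraints_def t_def by auto
  note invariance = SA[of k, folded t_def, rule_format]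
  note beta2' = beta2_has_real_derivative[where xi = xi and vi = vi and ui = ui and xp = xp
      and vp = vp and up = up and ?k2.0 = k2, OF dyn_xi dyn_vi dyn_xp dyn_vp]
  note bF' = bF_has_real_derivative[where xi = xi and vi = vi and ui = ui and xp = xp
      and vp = vp and up = up and ?k2.0 = k2, OF dyn_xi dyn_vi dyn_xp dyn_vp]
  have "beta2 L phi umin xi vi vp (t + dt) \<ge> 0"
    using invariance[OF _ beta_nonneg[folded t_def] beta2'] eta
    by simp
  moreover have "bF L phi delta k2 umin xi vi xp vp (t + dt) \<ge> 0"
  proof -
    have "bF L phi delta k2 umin xi vi xp vp t \<ge> 0"
      using bF_ge_bcbf2[OF p_nonneg _ u_ge, of xi t delta k2 vi xp vp] pos_range[of t] cbf
      by linarith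
    then show ?thesis
      using invariance[OF _ _ bF'] eta cbf k2_pos by simp
  qed
  ultimately show ?thesis
    using QP2_feasible_at_umin p_nonneg k2_pos umin_le bounds A1 vi_nonneg
    unfolding t_def by (simp add: less_imp_le)
qed

end
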